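(* Consider a single-core non-preemptive server of capacity $f>0$ and tasks $1,\dots,N$, all available at time $0$, task $a$ requiring $\alpha_a$ CPU cycles with deadline $\beta_a$. Let $\mathbf{s}$ be an optimal ordered set without outage and let $\mathbf{s}'=[s'(1),\dots,s'(P)]$ be the ordered set produced by the Optimal Job Scheduling algorithm. If there exists an index $i\in[1,P]$ such that $\alpha_{s(i)}<\alpha_{s'(i)}$ and $\beta_{s(i)}>\beta_{s'(i)}$, and $s(k)=s'(k)$ for all $k\in[1:i-1]$, then $s(i)\in\mathbf{s}'$.
   Context: An ordered set is a sequence of distinct tasks executed back-to-back from time $0$; the task in position $l$ completes at $\frac1f\sum_{k=1}^{l}\alpha_{s(k)}$ and is in outage if this exceeds its deadline. An optimal ordered set is an ordered set with no outage of maximum cardinality. Optimal Job Scheduling algorithm: let $\mathbf{c}=[c(1),\dots,c(N)]$ be the ordering of $[1:N]$ by nondecreasing $\alpha$ (ties broken by nonincreasing $\beta$) and $\mathbf{b}=[b(1),\dots,b(N)]$ the ordering of $[1:N]$ by nondecreasing $\beta$ (ties broken by nondecreasing $\alpha$). Initialize $\mathbf{q}=[q(1),\dots,q(N)]=\mathbf 0$ (entry $0$ denotes an empty slot, with $\alpha_0=0$). For $i=1,\dots,N$: find $i^*$ with $b(i^* )=c(i)$ and set $q(i^* )\gets b(i^* )$; if for some $j\in[i^*:N]$ with $q(j)\neq0$ we have $\sum_{k=1}^{j}\alpha_{q(k)}/f>\beta_{q(j)}$, reset $q(i^* )\gets0$. The output $\mathbf{s}'$ is the sequence of nonzero entries of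 $\mathbf{q}$ in order, of length $P$. *)

theory Defs
  imports Complex_Main
begin

(* Tasks are numbered 1..N; 0 denotes an empty slot. Lists are 0-indexed:
   list position l (0-based) corresponds to position l+1 in the paper. *)

definition ordered_set :: "nat \<Rightarrow> nat list \<Rightarrow> bool" where
  "ordered_set N s \<longleftrightarrow> distinct s \<and> set s \<subseteq> {1..N}"

definition completion :: "(nat \<Rightarrow> real) \<Rightarrow> real \<Rightarrow> nat list \<Rightarrow> nat \<Rightarrow> real" where
  "completion \<alpha> f s l = (\<Sum>k\<le>l. \<alpha> (s ! k)) / f"

definition no_outage :: "(nat \<Rightarrow> real) \<Rightarrow> (nat \<Rightarrow> real) \<Rightarrow> real \<Rightarrow> nat list \<Rightarrow> bool" where
  "no_outage \<alpha> \<beta> f s \<longleftrightarrow> (\<forall>l < length s. completion \<alpha> f s l \<le> \<beta> (s ! l))"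

definition optimal_ordered_set ::
  "nat \<Rightarrow> (nat \<Rightarrow> real) \<Rightarrow> (nat \<Rightarrow> real) \<Rightarrow> real \<Rightarrow> nat list \<Rightarrow> bool" where
  "optimal_ordered_set N \<alpha> \<beta> f s \<longleftrightarrow>
     ordered_set N s \<and> no_outage \<alpha> \<beta> f s \<and>
     (\<forall>t. ordered_set N t \<and> no_outage \<alpha> \<beta> f t \<longrightarrow> length t \<le> length s)"

definition is_c_order :: "nat \<Rightarrow> (nat \<Rightarrow> real) \<Rightarrow> (nat \<Rightarrow> real) \<Rightarrow> nat list \<Rightarrow> bool" where
  "is_c_order N \<alpha> \<beta> c \<longleftrightarrow> length c = N \<and> distinct c \<and> set c = {1..N} \<and>
     (\<forall>i j. i < j \<and> j < N \<longrightarrow>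
        \<alpha> (c ! i) < \<alpha> (c ! j) \<or> (\<alpha> (c ! i) = \<alpha> (c ! j) \<and> \<beta> (c ! i) \<ge> \<beta> (c ! j)))"

definition is_b_order :: "nat \<Rightarrow> (nat \<Rightarrow> real) \<Rightarrow> (nat \<Rightarrow> real) \<Rightarrow> nat list \<Rightarrow> bool" where
  "is_b_order N \<alpha> \<beta> b \<longleftrightarrow> length b = N \<and> distinct b \<and> set b = {1..N} \<and>
     (\<forall>i j. i < j \<and> j < N \<longrightarrow>
        \<beta> (b ! i) < \<beta> (b ! j) \<or> (\<beta> (b ! i) = \<beta> (b ! j) \<and> \<alpha> (b ! i) \<le> \<alpha> (b ! j)))"

definition slot_load :: "(nat \<Rightarrow> real) \<Rightarrow> real \<Rightarrow> nat list \<Rightarrow> nat \<Rightarrow> real" where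
  "slot_load \<alpha> f q j = (\<Sum>k\<le>j. if q ! k = 0 then 0 else \<alpha> (q ! k)) / f"

definition ojs_step ::
  "(nat \<Rightarrow> real) \<Rightarrow> (nat \<Rightarrow> real) \<Rightarrow> real \<Rightarrow> nat list \<Rightarrow> nat list \<Rightarrow> nat \<Rightarrow> nat list" where
  "ojs_step \<alpha> \<beta> f b q x =
     (let istar = (LEAST i. i < length b \<and> b ! i = x);
          q1 = q[istar := b ! istar]
      in if (\<exists>j. istar \<le> j \<and> j < length q1 \<and> q1 ! j \<noteq> 0 \<and>
                  slot_load \<alpha> f q1 j > \<beta> (q1 ! j))
         then q1[istar := 0] else q1)"

definition ojs_output ::
  "nat \<Rightarrow> (nat \<Rightarrow> real) \<Rightarrow> (nat \<Rightarrow> real) \<Rightarrow> real \<Rightarrow> nat list \<Rightarrow> nat list \<Rightarrow> nat list" where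
  "ojs_output N \<alpha> \<beta> f c b =
     filter (\<lambda>x. x \<noteq> 0) (foldl (ojs_step \<alpha> \<beta> f b) (replicate N 0) c)"

end

theory Submission
  imports Defs
begin

(* The hypotheses on s only serve to make s(i) a task: the content is that the algorithm never
   rejects a task x while accepting a task y with alpha_y > alpha_x and beta_y < beta_x.
   Tasks are processed by nondecreasing alpha, so y is processed after x, and the final slot
   vector F consists of the state Q in which x was rejected plus tasks no lighter than x,
   y among them, placed before the slot of x since beta_y < beta_x.  Rejection means that
   inserting x into Q overloads some slot j at or after the slot of x; the heavier y then
   overloads slot j in F as well, contradicting the invariant that no occupied slot of F
   misses its deadline. *)

definition slot :: "nat list \<Rightarrow> nat \<Rightarrow> nat" where
  "slot b x = (LEAST i. i < length b \<and> b ! i = x)"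

lemma slot_bounds:
  assumes "x \<in> set b"
  shows "slot b x < length b" and "b ! slot b x = x"
proof -
  from assms obtain i where "i < length b \<and> b ! i = x" by (auto simp: in_set_conv_nth)
  then have "slot b x < length b \<and> b ! slot b x = x"
    unfolding slot_def by (rule LeastI)
  then show "slot b x < length b" and "b ! slot b x = x" by auto
qed

lemma slot_nth:
  assumes "distinct b" "p < length b"
  shows "slot b (b ! p) = p"
  unfolding slot_def using assms by (auto intro!: Least_equality simp: nth_eq_iff_index_eq)

definition has_outage_from :: "(nat \<Rightarrow> real) \<Rightarrow> (nat \<Rightarrow> real) \<Rightarrow> real \<Rightarrow> nat list \<Rightarrow> nat \<Rightarrow> bool" where
  "has_outage_from \<alpha> \<beta> f q p \<longleftrightarrow>
     (\<exists>j. p \<le> j \<and> j < length q \<and> q ! j \<noteq> 0 \<and> \<beta> (q ! j) < slot_load \<alpha> f q j)"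

lemma ojs_step_eq:
  assumes "x \<in> set b"
  shows "ojs_step \<alpha> \<beta> f b q x =
    (if has_outage_from \<alpha> \<beta> f (q[slot b x := x]) (slot b x)
     then q[slot b x := 0] else q[slot b x := x])"
  using slot_bounds(2)[OF assms]
  unfolding ojs_step_def has_outage_from_def slot_def[symmetric] Let_def by auto

lemma length_ojs_step [simp]: "length (ojs_step \<alpha> \<beta> f b q x) = length q"
  unfolding ojs_step_def Let_def by simp

lemma length_foldl_ojs_step [simp]: "length (foldl (ojs_step \<alpha> \<beta> f b) q cs) = length q"
  by (induction cs arbitrary: q) auto

lemma ojs_step_nth_other:
  assumes "x \<in> set b" "b ! p \<noteq> x"
  shows "ojs_step \<alpha> \<beta> f b q x ! p = q ! p"
proof -
  have "slot b x \<noteq> p" using slot_bounds(2)[OF assms(1)] assms(2) by auto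
  then show ?thesis by (simp add: ojs_step_eq[OF assms(1)])
qed

lemma foldl_ojs_step_nth_other:
  assumes "set cs \<subseteq> set b" "b ! p \<notin> set cs"
  shows "foldl (ojs_step \<alpha> \<beta> f b) q cs ! p = q ! p"
  using assms by (induction cs arbitrary: q) (auto simp: ojs_step_nth_other)

lemma foldl_ojs_step_changed_slot:
  assumes "set cs \<subseteq> set b" "foldl (ojs_step \<alpha> \<beta> f b) q cs ! k \<noteq> q ! k"
  shows "b ! k \<in> set cs"
  using foldl_ojs_step_nth_other[OF assms(1)] assms(2) by blast

lemma ojs_step_rejected:
  assumes "x \<in> set b" "slot b x < length q" "ojs_step \<alpha> \<beta> f b q x ! slot b x \<noteq> x"
  shows "ojs_step \<alpha> \<beta> f b q x ! slot b x = 0"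
    and "has_outage_from \<alpha> \<beta> f (q[slot b x := x]) (slot b x)"
  using assms by (auto simp: ojs_step_eq split: if_splits)

definition admissible_slots ::
  "(nat \<Rightarrow> real) \<Rightarrow> (nat \<Rightarrow> real) \<Rightarrow> real \<Rightarrow> nat list \<Rightarrow> nat list \<Rightarrow> bool" where
  "admissible_slots \<alpha> \<beta> f b q \<longleftrightarrow>
     (\<forall>j<length q. q ! j = 0 \<or> q ! j = b ! j) \<and>
     (\<forall>j<length q. q ! j \<noteq> 0 \<longrightarrow> slot_load \<alpha> f q j \<le> \<beta> (q ! j))"

lemma admissible_slots_replicate_zero: "admissible_slots \<alpha> \<beta> f b (replicate N 0)"
  by (simp add: admissible_slots_def)

lemma admissible_slots_no_outage:
  "admissible_slots \<alpha> \<beta> f b q \<Longrightarrow> \<not> has_outage_from \<alpha> \<beta> f q p"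
  by (force simp: admissible_slots_def has_outage_from_def)

lemma slot_load_update_before:
  assumes "j < p"
  shows "slot_load \<alpha> f (q[p := x]) j = slot_load \<alpha> f q j"
  unfolding slot_load_def using assms by (intro arg_cong[where f = "\<lambda>s. s / f"] sum.cong) auto

lemma slot_load_update_empty:
  assumes "q ! p = 0" "x \<noteq> 0" "p \<le> j" "j < length q"
  shows "slot_load \<alpha> f (q[p := x]) j = slot_load \<alpha> f q j + \<alpha> x / f"
proof -
  have "(\<Sum>k\<le>j. if q[p := x] ! k = 0 then 0 else \<alpha> (q[p := x] ! k))
      = (\<Sum>k\<le>j. (if q ! k = 0 then 0 else \<alpha> (q ! k)) + (if k = p then \<alpha> x else 0))"
    using assms by (intro sum.cong) auto
  also have "\<dots> = (\<Sum>k\<le>j. if q ! k = 0 then 0 else \<alpha> (q ! k)) + \<alpha> x"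
    using assms(3) by (simp add: sum.distrib)
  finally show ?thesis by (simp add: slot_load_def add_divide_distrib)
qed

lemma admissible_slots_ojs_step:
  assumes "admissible_slots \<alpha> \<beta> f b q" "x \<in> set b"
  shows "admissible_slots \<alpha> \<beta> f b (ojs_step \<alpha> \<beta> f b q x)"
proof -
  define p where "p = slot b x"
  have b_p: "b ! p = x" using slot_bounds(2)[OF assms(2)] by (simp add: p_def)
  show ?thesis
  proof (cases "has_outage_from \<alpha> \<beta> f (q[p := x]) p")
    case True
    then have "q[p := x] \<noteq> q" using admissible_slots_no_outage[OF assms(1)] by metis
    then have "p < length q" "q ! p \<noteq> x" by (metis list_update_beyond not_le, metis list_update_id)
    then have "q ! p = 0" using assms(1) b_p by (auto simp: admissible_slots_def)
    then have "ojs_step \<alpha> \<beta> f b q x = q"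
      using True by (simp add: ojs_step_eq[OF assms(2)] p_def[symmetric]) (metis list_update_id)
    then show ?thesis using assms(1) by simp
  next
    case no_outage: False
    have "admissible_slots \<alpha> \<beta> f b (q[p := x])"
      unfolding admissible_slots_def
    proof (intro conjI allI impI)
      fix j assume "j < length (q[p := x])"
      then show "q[p := x] ! j = 0 \<or> q[p := x] ! j = b ! j"
        using assms(1) b_p by (cases "j = p") (auto simp: admissible_slots_def)
    next
      fix j assume j: "j < length (q[p := x])" "q[p := x] ! j \<noteq> 0"
      show "slot_load \<alpha> f (q[p := x]) j \<le> \<beta> (q[p := x] ! j)"
      proof (cases "p \<le> j")
        case True
        then show ?thesis using no_outage j unfolding has_outage_from_def by (meson not_less)
      next
        case False
        then show ?thesis
          using assms(1) j by (auto simp: admissible_slots_def slot_load_update_before)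
      qed
    qed
    then show ?thesis using no_outage by (simp add: ojs_step_eq[OF assms(2)] p_def[symmetric])
  qed
qed

lemma admissible_slots_foldl_ojs_step:
  "admissible_slots \<alpha> \<beta> f b q \<Longrightarrow> set cs \<subseteq> set b \<Longrightarrow>
   admissible_slots \<alpha> \<beta> f b (foldl (ojs_step \<alpha> \<beta> f b) q cs)"
  by (induction cs arbitrary: q) (auto simp: admissible_slots_ojs_step)

lemma slot_load_first_occupied:
  assumes "\<forall>m<k. q ! m = 0" "q ! k \<noteq> 0"
  shows "slot_load \<alpha> f q k = \<alpha> (q ! k) / f"
  using assms by (simp add: slot_load_def flip: lessThan_Suc_atMost)

lemma slot_load_extension:
  assumes "f > 0"
    and "\<forall>k\<le>j. Q ! k \<noteq> 0 \<longrightarrow> F ! k = Q ! k"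
    and "\<forall>k\<le>j. Q ! k = 0 \<longrightarrow> F ! k \<noteq> 0 \<longrightarrow> 0 \<le> \<alpha> (F ! k)"
    and "k \<le> j" "Q ! k = 0" "F ! k \<noteq> 0"
  shows "slot_load \<alpha> f Q j + \<alpha> (F ! k) / f \<le> slot_load \<alpha> f F j"
proof -
  define w where "w q m = (if q ! m = 0 then 0 else \<alpha> (q ! m))" for q :: "nat list" and m
  have gain: "0 \<le> w F m - w Q m" if "m \<le> j" for m
    using assms(2,3) that by (auto simp: w_def)
  have "\<alpha> (F ! k) = w F k - w Q k" using assms(5,6) by (simp add: w_def)
  also have "\<dots> \<le> (\<Sum>m\<le>j. w F m - w Q m)"
    using assms(4) gain by (intro member_le_sum) auto
  also have "\<dots> = (\<Sum>m\<le>j. w F m) - (\<Sum>m\<le>j. w Q m)" by (simp add: sum_subtractf)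
  finally have "(\<Sum>m\<le>j. w Q m) + \<alpha> (F ! k) \<le> (\<Sum>m\<le>j. w F m)" by simp
  then have "((\<Sum>m\<le>j. w Q m) + \<alpha> (F ! k)) / f \<le> (\<Sum>m\<le>j. w F m) / f"
    using assms(1) by (simp add: divide_right_mono)
  moreover have "slot_load \<alpha> f q j = (\<Sum>m\<le>j. w q m) / f" for q
    by (simp add: slot_load_def w_def)
  ultimately show ?thesis by (simp add: add_divide_distrib)
qed

lemma is_b_order_deadline_mono:
  assumes "is_b_order N \<alpha> \<beta> b" "i \<le> j" "j < N"
  shows "\<beta> (b ! i) \<le> \<beta> (b ! j)"
proof (cases "i = j")
  case False
  then have "i < j" using assms(2) by simp
  then show ?thesis using assms(1,3) unfolding is_b_order_def by fastforce
qed simp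

lemma slot_load_le_deadline:
  assumes "is_b_order N \<alpha> \<beta> b" "admissible_slots \<alpha> \<beta> f b q" "length q = N"
    and "k \<le> p" "p < N" "q ! k \<noteq> 0"
  shows "slot_load \<alpha> f q p \<le> \<beta> (b ! p)"
proof -
  have occupied: "slot_load \<alpha> f q n \<le> \<beta> (b ! n)" if "n < N" "q ! n \<noteq> 0" for n
    using assms(2,3) that unfolding admissible_slots_def by metis
  have "n < N \<Longrightarrow> slot_load \<alpha> f q n \<le> \<beta> (b ! n)" if "k \<le> n" for n
    using that
  proof (induction n rule: dec_induct)
    case base
    then show ?case using occupied assms(6) by blast
  next
    case (step n)
    show ?case
    proof (cases "q ! Suc n = 0")
      case True
      then have "slot_load \<alpha> f q (Suc n) = slot_load \<alpha> f q n"
        by (simp add: slot_load_def)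
      also have "\<dots> \<le> \<beta> (b ! n)" using step by simp
      also have "\<dots> \<le> \<beta> (b ! Suc n)" using is_b_order_deadline_mono[OF assms(1)] step.prems by simp
      finally show ?thesis .
    next
      case False
      then show ?thesis using occupied step.prems by blast
    qed
  qed
  then show ?thesis using assms(4,5) by blast
qed

text \<open>For \<open>\<alpha> x \<ge> 0\<close> the tasks that \<open>F\<close> adds to \<open>Q\<close> only increase the load at slot \<open>j\<close>.
  Nothing excludes negative cycle counts, however; for \<open>\<alpha> x < 0\<close> the overload forces \<open>Q\<close> to be
  empty up to \<open>j\<close>, and then already the first occupied slot of \<open>F\<close> misses its deadline.\<close>

lemma insertion_outage_excludes_heavier_extension:
  assumes "f > 0" "is_b_order N \<alpha> \<beta> b"
    and Q: "admissible_slots \<alpha> \<beta> f b Q" "length Q = N"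
    and F: "admissible_slots \<alpha> \<beta> f b F" "length F = N"
    and extends: "\<forall>k<N. Q ! k \<noteq> 0 \<longrightarrow> F ! k = Q ! k"
    and heavier: "\<forall>k<N. Q ! k = 0 \<longrightarrow> F ! k \<noteq> 0 \<longrightarrow> \<alpha> x \<le> \<alpha> (F ! k)"
    and insert: "b ! p = x" "x \<noteq> 0" "Q ! p = 0"
    and outage: "p \<le> j" "j < N" "Q[p := x] ! j \<noteq> 0"
      "\<beta> (Q[p := x] ! j) < slot_load \<alpha> f (Q[p := x]) j"
    and new: "k \<le> j" "Q ! k = 0" "F ! k \<noteq> 0" "\<alpha> x < \<alpha> (F ! k)"
  shows False
proof -
  have "Q[p := x] ! j = b ! j"
    using Q insert outage by (cases "j = p") (auto simp: admissible_slots_def)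
  then have overload: "\<beta> (b ! j) < slot_load \<alpha> f Q j + \<alpha> x / f"
    using outage slot_load_update_empty[OF insert(3,2) outage(1)] Q(2) by simp
  have F_bound: "slot_load \<alpha> f F j \<le> \<beta> (b ! j)"
    using slot_load_le_deadline[OF assms(2) F new(1) outage(2) new(3)] .
  show False
  proof (cases "0 \<le> \<alpha> x")
    case True
    have "\<forall>m\<le>j. Q ! m \<noteq> 0 \<longrightarrow> F ! m = Q ! m"
      using extends outage(2) by auto
    moreover have "\<forall>m\<le>j. Q ! m = 0 \<longrightarrow> F ! m \<noteq> 0 \<longrightarrow> 0 \<le> \<alpha> (F ! m)"
      using True heavier outage(2) by (meson le_less_trans order.trans)
    ultimately have "slot_load \<alpha> f Q j + \<alpha> (F ! k) / f \<le> slot_load \<alpha> f F j"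
      using slot_load_extension[OF assms(1) _ _ new(1-3)] by blast
    moreover have "\<alpha> x / f < \<alpha> (F ! k) / f" using new(4) assms(1) by (simp add: divide_strict_right_mono)
    ultimately show False using overload F_bound by linarith
  next
    case False
    then have "\<alpha> x / f < 0" using assms(1) by (simp add: divide_neg_pos)
    then have Q_empty: "\<forall>m\<le>j. Q ! m = 0"
      using slot_load_le_deadline[OF assms(2) Q _ outage(2)] overload by fastforce
    then have "\<beta> (b ! j) < \<alpha> x / f" using overload by (simp add: slot_load_def)
    define k1 where "k1 = (LEAST m. F ! m \<noteq> 0)"
    have k1: "F ! k1 \<noteq> 0" "k1 \<le> k" "\<forall>m<k1. F ! m = 0"
      using LeastI[of "\<lambda>m. F ! m \<noteq> 0" k] Least_le[of "\<lambda>m. F ! m \<noteq> 0" k] not_less_Least new(3)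
      unfolding k1_def by auto
    have "\<alpha> (F ! k1) / f = slot_load \<alpha> f F k1" using slot_load_first_occupied[OF k1(3,1)] by simp
    also have "\<dots> \<le> \<beta> (b ! j)"
      using slot_load_le_deadline[OF assms(2) F order.refl _ k1(1)] k1(2) new(1) outage(2)
        is_b_order_deadline_mono[OF assms(2), of k1 j] by fastforce
    finally have "\<alpha> (F ! k1) / f < \<alpha> x / f" using \<open>\<beta> (b ! j) < \<alpha> x / f\<close> by linarith
    moreover have "\<alpha> x \<le> \<alpha> (F ! k1)"
      using heavier Q_empty k1 new(1) outage(2) by fastforce
    ultimately show False using assms(1) divide_right_mono[of "\<alpha> x" "\<alpha> (F ! k1)" f] by linarith
  qed
qed

lemma is_c_order_split:
  assumes "is_c_order N \<alpha> \<beta> c" "x \<in> set c"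
  obtains c1 c2 where "c = c1 @ x # c2" "\<forall>z\<in>set c1. \<alpha> z \<le> \<alpha> x" "\<forall>z\<in>set c2. \<alpha> x \<le> \<alpha> z"
proof -
  have "sorted (map \<alpha> c)"
    using assms(1) unfolding is_c_order_def sorted_iff_nth_mono_less by fastforce
  moreover obtain c1 c2 where "c = c1 @ x # c2" using split_list[OF assms(2)] by blast
  ultimately show thesis by (intro that) (auto simp: sorted_append)
qed

lemma ojs_reject_imp_no_dominated_accept:
  assumes "f > 0" "is_b_order N \<alpha> \<beta> b"
    and parts: "set c1 \<subseteq> set b" "set (x # c2) \<subseteq> set b" "set c1 \<inter> set (x # c2) = {}" "x \<notin> set c2"
    and lighter: "\<forall>z\<in>set c1. \<alpha> z \<le> \<alpha> x" and heavier: "\<forall>z\<in>set c2. \<alpha> x \<le> \<alpha> z"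
    and "x \<noteq> 0" and k: "k < N"
  defines "F \<equiv> foldl (ojs_step \<alpha> \<beta> f b) (replicate N 0) (c1 @ x # c2)"
  assumes occupied: "F ! k \<noteq> 0" and rejected: "F ! slot b x \<noteq> x"
  shows "\<not> (\<alpha> x < \<alpha> (F ! k) \<and> \<beta> (F ! k) < \<beta> x)"
proof
  assume dominated: "\<alpha> x < \<alpha> (F ! k) \<and> \<beta> (F ! k) < \<beta> x"
  define Q where "Q = foldl (ojs_step \<alpha> \<beta> f b) (replicate N 0) c1"
  have F_Q: "F = foldl (ojs_step \<alpha> \<beta> f b) Q (x # c2)" by (simp add: F_def Q_def)
  have b: "length b = N" "distinct b" using assms(2) by (auto simp: is_b_order_def)
  have adm_Q: "admissible_slots \<alpha> \<beta> f b Q"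
    using admissible_slots_foldl_ojs_step[OF admissible_slots_replicate_zero parts(1)] Q_def by simp
  then have adm_F: "admissible_slots \<alpha> \<beta> f b F"
    using admissible_slots_foldl_ojs_step[OF _ parts(2)] F_Q by simp
  have len: "length Q = N" "length F = N" by (simp_all add: Q_def F_Q)
  have Q_occupied: "b ! m \<in> set c1" if "Q ! m \<noteq> 0" "m < N" for m
    using foldl_ojs_step_changed_slot[OF parts(1), of \<alpha> \<beta> f "replicate N 0" m] that
    by (simp add: Q_def)
  have F_changed: "b ! m \<in> set (x # c2)" if "F ! m \<noteq> Q ! m" for m
    using foldl_ojs_step_changed_slot[OF parts(2)] that by (simp add: F_Q)
  define p where "p = slot b x"
  have p: "p < N" "b ! p = x" using slot_bounds[of x b] parts(2) b by (auto simp: p_def)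
  have "F ! p = ojs_step \<alpha> \<beta> f b Q x ! p"
    using foldl_ojs_step_nth_other[of c2 b p] parts(2,4) p(2) by (simp add: F_Q)
  then have F_p: "F ! p = 0" and outage: "has_outage_from \<alpha> \<beta> f (Q[p := x]) p"
    using ojs_step_rejected[of x b Q] rejected parts(2) p(1) len(1) by (simp_all add: p_def)
  then obtain j where j: "p \<le> j" "j < N" "Q[p := x] ! j \<noteq> 0"
    "\<beta> (Q[p := x] ! j) < slot_load \<alpha> f (Q[p := x]) j"
    using len(1) by (auto simp: has_outage_from_def)
  have Q_p: "Q ! p = 0" using Q_occupied p parts(3) by auto
  have b_k: "b ! k = F ! k" using adm_F k occupied len(2) by (auto simp: admissible_slots_def)
  have Q_k: "Q ! k = 0" using Q_occupied[OF _ k] b_k lighter dominated by fastforce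
  have "k < p"
    using is_b_order_deadline_mono[OF assms(2), of p k] k p(2) b_k dominated
    by (cases "k < p") simp_all
  have extends: "\<forall>m<N. Q ! m \<noteq> 0 \<longrightarrow> F ! m = Q ! m"
    using Q_occupied F_changed parts(3) by blast
  have new_heavier: "\<forall>m<N. Q ! m = 0 \<longrightarrow> F ! m \<noteq> 0 \<longrightarrow> \<alpha> x \<le> \<alpha> (F ! m)"
  proof (intro allI impI)
    fix m assume m: "m < N" "Q ! m = 0" "F ! m \<noteq> 0"
    then have "F ! m = b ! m" using adm_F len(2) by (auto simp: admissible_slots_def)
    moreover have "b ! m \<noteq> x" using m F_p slot_nth[of b m] b by (auto simp: p_def)
    ultimately show "\<alpha> x \<le> \<alpha> (F ! m)" using F_changed[of m] m heavier by auto
  qed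
  show False
    using insertion_outage_excludes_heavier_extension[OF assms(1,2) adm_Q len(1) adm_F len(2)
        extends new_heavier p(2) assms(9) Q_p j _ Q_k occupied] \<open>k < p\<close> j(1) dominated
    by simp
qed

theorem dominating_task_mem_ojs_output:
  assumes "f > 0" "is_c_order N \<alpha> \<beta> c" "is_b_order N \<alpha> \<beta> b"
    and x: "x \<in> {1..N}"
    and y: "y \<in> set (ojs_output N \<alpha> \<beta> f c b)" "\<alpha> x < \<alpha> y" "\<beta> y < \<beta> x"
  shows "x \<in> set (ojs_output N \<alpha> \<beta> f c b)"
proof (rule ccontr)
  assume rejected: "x \<notin> set (ojs_output N \<alpha> \<beta> f c b)"
  have c: "distinct c" "set c = {1..N}" and b: "length b = N" "set b = {1..N}"
    using assms(2,3) by (auto simp: is_c_order_def is_b_order_def)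
  obtain c1 c2 where c_split: "c = c1 @ x # c2"
    and lighter: "\<forall>z\<in>set c1. \<alpha> z \<le> \<alpha> x" and heavier: "\<forall>z\<in>set c2. \<alpha> x \<le> \<alpha> z"
    using is_c_order_split[OF assms(2)] x c(2) by blast
  have parts: "set c1 \<subseteq> set b" "set (x # c2) \<subseteq> set b" "set c1 \<inter> set (x # c2) = {}" "x \<notin> set c2"
    using c b c_split by auto
  define F where "F = foldl (ojs_step \<alpha> \<beta> f b) (replicate N 0) (c1 @ x # c2)"
  have out: "ojs_output N \<alpha> \<beta> f c b = filter (\<lambda>z. z \<noteq> 0) F"
    by (simp add: ojs_output_def F_def c_split)
  have len: "length F = N" by (simp add: F_def)
  obtain k where k: "k < N" "F ! k = y" using y(1) len by (auto simp: out in_set_conv_nth)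
  have "y \<noteq> 0" using y(1) by (simp add: out)
  have "x \<notin> set F" using rejected x by (simp add: out)
  moreover have "slot b x < length F" using slot_bounds(1)[of x b] x b len by simp
  ultimately have "F ! slot b x \<noteq> x" by (metis nth_mem)
  moreover have "x \<noteq> 0" using x by simp
  ultimately have "\<not> (\<alpha> x < \<alpha> y \<and> \<beta> y < \<beta> x)"
    using ojs_reject_imp_no_dominated_accept[OF assms(1,3) parts lighter heavier _ k(1), folded F_def]
      \<open>y \<noteq> 0\<close> k(2) by blast
  then show False using y(2,3) by simp
qed

theorem lemma2:
  fixes N :: nat and \<alpha> \<beta> :: "nat \<Rightarrow> real" and f :: real
    and c b s :: "nat list" and i :: nat
  assumes "f > 0"
    and "is_c_order N \<alpha> \<beta> c"
    and "is_b_order N \<alpha> \<beta> b"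
    and "optimal_ordered_set N \<alpha> \<beta> f s"
    and "i < length (ojs_output N \<alpha> \<beta> f c b)"
    and "i < length s"
    and "\<alpha> (s ! i) < \<alpha> (ojs_output N \<alpha> \<beta> f c b ! i)"
    and "\<beta> (s ! i) > \<beta> (ojs_output N \<alpha> \<beta> f c b ! i)"
    and "\<forall>k < i. s ! k = ojs_output N \<alpha> \<beta> f c b ! k"
  shows "s ! i \<in> set (ojs_output N \<alpha> \<beta> f c b)"
proof (rule dominating_task_mem_ojs_output[OF assms(1-3) _ _ assms(7,8)])
  show "s ! i \<in> {1..N}"
    using assms(4,6) nth_mem unfolding optimal_ordered_set_def ordered_set_def by blast
  show "ojs_output N \<alpha> \<beta> f c b ! i \<in> set (ojs_output N \<alpha> \<beta> f c b)"
    using assms(5) by simp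
qed

end
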